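(* Let $\mathbb{X}$ be a finite alphabet and let $\Gamma$ be a Yang-Kieffer minimal grammar transform, i.e. $\Gamma(w)\in\mathcal{G}(w)$, $|\Gamma(w)|=\min_{\mathsf{G}\in\mathcal{G}(w)}|\mathsf{G}|$, and $\alpha_i\neq\lambda$ for every secondary rule $A_i\to\alpha_i$ of $\Gamma(w)$. Then for any strings $u,v\in\mathbb{X}^*$ and $w=uv$, $$0\le|\Gamma(u)|+|\Gamma(v)|-|\Gamma(w)|\le \mathrm{V}[\Gamma(w)]\,\mathbf{L}(w).$$
   Context: $\mathbb{X}^*$ is the set of all finite strings over $\mathbb{X}$ including the empty string $\lambda$. An admissible grammar is a tuple $\mathsf{G}=(\alpha_1,\dots,\alpha_n)$ standing for rules $A_i\to\alpha_i$ with start symbol $A_1$ and secondary nonterminals $A_2,\dots,A_n$, where $\alpha_i\in(\{A_{i+1},\dots,A_n\}\cup\mathbb{X})^*$; it generates exactly one string. $\mathcal{G}(w)$ is the set of admissible grammars generating $w$, $\mathrm{V}[\mathsf{G}]:=n$, and the Yang-Kieffer length is $|\mathsf{G}|:=\sum_i|\alpha_i|$. $\mathbf{L}(w):=\max\{|s|: w=x_1sy_1=x_2sy_2,\ x_1\neq x_2\}$ with $s,x_i,y_i\in\mathbb{X}^*$ (maximal length of a possibly overlapping repeat). *)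

theory Defs
  imports Main
begin

text \<open>Symbols of a grammar: terminals from the alphabet, or nonterminals.
  Nonterminal A_(i+1) of the paper is represented by N i (0-based), so the
  start symbol A_1 is N 0.\<close>
datatype 'x sym = T 'x | N nat

text \<open>A grammar (alpha_1,...,alpha_n) is the list of right-hand sides;
  G ! i is the right-hand side of nonterminal N i.\<close>
type_synonym 'x grammar = "'x sym list list"

definition admissible :: "'x grammar \<Rightarrow> bool" where
  "admissible G \<longleftrightarrow> G \<noteq> [] \<and>
     (\<forall>i < length G. \<forall>s \<in> set (G ! i).
        (case s of T _ \<Rightarrow> True | N j \<Rightarrow> i < j \<and> j < length G))"

text \<open>Expansion with a depth bound (sufficient for admissible grammars,
  since every rule only refers to strictly later nonterminals).\<close>
primrec expand :: "nat \<Rightarrow> 'x grammar \<Rightarrow> nat \<Rightarrow> 'x list" where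
  "expand 0 G i = []"
| "expand (Suc k) G i =
     concat (map (\<lambda>s. case s of T x \<Rightarrow> [x] | N j \<Rightarrow> expand k G j) (G ! i))"

definition generated :: "'x grammar \<Rightarrow> 'x list" where
  "generated G = expand (length G) G 0"

definition grammars :: "'x list \<Rightarrow> 'x grammar set" where
  "grammars w = {G. admissible G \<and> generated G = w}"

definition V :: "'x grammar \<Rightarrow> nat" where
  "V G = length G"

definition yk_len :: "'x grammar \<Rightarrow> nat" where
  "yk_len G = sum_list (map length G)"

text \<open>L(w): maximal length of a (possibly overlapping) repeat
  (0 if there is none, i.e. for the empty string).\<close>
definition maxrep :: "'x list \<Rightarrow> nat" where
  "maxrep w = Sup {length s | s. \<exists>x1 y1 x2 y2.
      w = x1 @ s @ y1 \<and> w = x2 @ s @ y2 \<and> x1 \<noteq> x2}"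

definition yk_minimal_transform :: "('x list \<Rightarrow> 'x grammar) \<Rightarrow> bool" where
  "yk_minimal_transform \<Gamma> \<longleftrightarrow> (\<forall>w.
     \<Gamma> w \<in> grammars w \<and>
     yk_len (\<Gamma> w) = Inf (yk_len ` grammars w) \<and>
     (\<forall>i. 1 \<le> i \<and> i < length (\<Gamma> w) \<longrightarrow> \<Gamma> w ! i \<noteq> []))"

end

(*
  Lower bound: concatenating the start rules of \<Gamma> u and \<Gamma> v, with the secondary rules of
  \<Gamma> v renumbered behind those of \<Gamma> u, yields a grammar for uv of length |\<Gamma> u| + |\<Gamma> v|.

  Upper bound: let G = \<Gamma> w and cut the start rule of G at the symbol whose expansion straddles
  the boundary between u and v. Keeping the secondary rules and spelling out the two halves of
  that symbol as terminals gives grammars for u and for v, whose total length exceeds |G| by at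
  most the expansion length of one nonterminal plus the total length of the secondary rules.
  By minimality every secondary nonterminal occurs at least twice in G (otherwise inlining it
  would shorten G), so its expansion occurs at two different positions of w and is no longer
  than L(w); and since no secondary rule is empty, a rule is never longer than its expansion.
  Hence the excess is at most V(G) L(w).
*)

theory Submission
  imports Defs
begin

section \<open>Lists and repeats\<close>

lemma length_le_length_concat_map:
  "(\<And>x. x \<in> set xs \<Longrightarrow> f x \<noteq> []) \<Longrightarrow> length xs \<le> length (concat (map f xs))"
proof (induction xs)
  case (Cons x xs)
  then have "f x \<noteq> []" "length xs \<le> length (concat (map f xs))" by auto
  then show ?case by (cases "f x") auto
qed simp

lemma concat_map_concat: "concat (map f (concat xss)) = concat (map (concat \<circ> map f) xss)"
  by (induction xss) auto

lemma length_concat_map_replace: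
  "length (concat (map (\<lambda>s. if s = x then r else [s]) xs)) + count_list xs x
     = length xs + count_list xs x * length r"
  by (induction xs) auto

lemma concat_map_eq_appendE:
  assumes "concat (map f xs) = u @ v" "xs \<noteq> []"
  obtains a x b p q where "xs = a @ x # b" "f x = p @ q"
    "u = concat (map f a) @ p" "v = q @ concat (map f b)"
proof -
  from concat_eq_appendD[OF assms(1)] assms(2) obtain xss1 ys ys' xss2 where
    "map f xs = xss1 @ (ys @ ys') # xss2" "u = concat xss1 @ ys" "v = ys' @ concat xss2"
    by auto
  moreover from this(1) obtain a x b where "xs = a @ x # b" "xss1 = map f a" "f x = ys @ ys'" "xss2 = map f b"
    by (auto simp: map_eq_append_conv Cons_eq_map_conv)
  ultimately show ?thesis using that[of a x b ys ys'] by simp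
qed

lemma count_list_ge_2_split:
  assumes "2 \<le> count_list xs x"
  obtains a b c where "xs = a @ x # b @ x # c"
proof -
  obtain n where "count_list xs x = Suc (Suc n)" using assms by (metis add_2_eq_Suc le_Suc_ex)
  then obtain a rest where "xs = a @ x # rest" "count_list rest x = Suc n"
    by (metis count_list_Suc_split_first)
  moreover from this(2) obtain b c where "rest = b @ x # c"
    by (metis count_list_Suc_split_first)
  ultimately show ?thesis using that by blast
qed

definition is_repeat :: "'x list \<Rightarrow> 'x list \<Rightarrow> bool" where
  "is_repeat s w \<longleftrightarrow> (\<exists>x1 y1 x2 y2. w = x1 @ s @ y1 \<and> w = x2 @ s @ y2 \<and> x1 \<noteq> x2)"

lemma is_repeat_le_maxrep:
  assumes "is_repeat s w"
  shows "length s \<le> maxrep w"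
proof -
  let ?S = "{length s |s. \<exists>x1 y1 x2 y2. w = x1 @ s @ y1 \<and> w = x2 @ s @ y2 \<and> x1 \<noteq> x2}"
  have "length s \<in> ?S" using assms unfolding is_repeat_def by blast
  moreover have "bdd_above ?S" by (rule bdd_aboveI[of _ "length w"]) auto
  ultimately show ?thesis unfolding maxrep_def by (rule cSup_upper)
qed

lemma is_repeat_infix:
  assumes "is_repeat (a @ s @ b) w"
  shows "is_repeat s w"
proof -
  from assms obtain x1 y1 x2 y2 where "w = x1 @ a @ s @ b @ y1" "w = x2 @ a @ s @ b @ y2" "x1 \<noteq> x2"
    by (auto simp: is_repeat_def)
  then have "w = (x1 @ a) @ s @ b @ y1" "w = (x2 @ a) @ s @ b @ y2" "x1 @ a \<noteq> x2 @ a" by auto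
  then show ?thesis unfolding is_repeat_def by blast
qed

section \<open>Expansion of admissible grammars\<close>

text \<open>The guard \<open>i < j\<close>, vacuous on admissible grammars, makes the recursion terminate
  on every grammar.\<close>
function expansion :: "'x grammar \<Rightarrow> nat \<Rightarrow> 'x list" where
  "expansion G i =
     (if i < length G
      then concat (map (\<lambda>s. case s of T x \<Rightarrow> [x] | N j \<Rightarrow> if i < j then expansion G j else []) (G ! i))
      else [])"
  by pat_completeness auto
termination by (relation "measure (\<lambda>(G, i). length G - i)") auto

declare expansion.simps [simp del]

fun sym_expansion :: "'x grammar \<Rightarrow> 'x sym \<Rightarrow> 'x list" where
  "sym_expansion G (T x) = [x]"
| "sym_expansion G (N j) = expansion G j"

lemma sym_expansion_comp_T [simp]: "sym_expansion G \<circ> T = (\<lambda>x. [x])"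
  by auto

lemma admissible_iff:
  "admissible G \<longleftrightarrow> G \<noteq> [] \<and> (\<forall>i < length G. \<forall>j. N j \<in> set (G ! i) \<longrightarrow> i < j \<and> j < length G)"
  unfolding admissible_def by (auto split: sym.split)

lemma admissibleI:
  "G \<noteq> [] \<Longrightarrow> (\<And>i j. i < length G \<Longrightarrow> N j \<in> set (G ! i) \<Longrightarrow> i < j \<and> j < length G) \<Longrightarrow> admissible G"
  unfolding admissible_iff by blast

lemma admissible_N_in_rule:
  "admissible G \<Longrightarrow> i < length G \<Longrightarrow> N j \<in> set (G ! i) \<Longrightarrow> i < j \<and> j < length G"
  unfolding admissible_iff by blast

lemma expansion_rule:
  assumes "admissible G" "i < length G"
  shows "expansion G i = concat (map (sym_expansion G) (G ! i))"
proof -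
  have "(case s of T x \<Rightarrow> [x] | N j \<Rightarrow> if i < j then expansion G j else []) = sym_expansion G s"
    if "s \<in> set (G ! i)" for s
    by (cases s) (use that admissible_N_in_rule[OF assms] in auto)
  then show ?thesis
    using assms(2) by (subst expansion.simps) (simp cong: map_cong)
qed

lemma expand_eq_expansion:
  assumes "admissible G" "i < length G" "length G - i \<le> k"
  shows "expand k G i = expansion G i"
  using assms(2,3)
proof (induction k arbitrary: i)
  case (Suc k)
  have "(case s of T x \<Rightarrow> [x] | N j \<Rightarrow> expand k G j) = sym_expansion G s" if "s \<in> set (G ! i)" for s
  proof (cases s)
    case (N j)
    with that admissible_N_in_rule[OF assms(1) Suc.prems(1)] have "i < j" "j < length G" by auto
    then show ?thesis using Suc.IH[of j] Suc.prems N by simp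
  qed simp
  then show ?case
    using expansion_rule[OF assms(1) Suc.prems(1)] by (simp cong: map_cong)
qed simp

lemma generated_eq_expansion: "admissible G \<Longrightarrow> generated G = expansion G 0"
  unfolding generated_def by (rule expand_eq_expansion) (auto simp: admissible_def)

lemma generated_eq_start_rule:
  "admissible G \<Longrightarrow> generated G = concat (map (sym_expansion G) (G ! 0))"
  using expansion_rule[of G 0] by (simp add: generated_eq_expansion admissible_def)

lemma grammars_iff: "G \<in> grammars w \<longleftrightarrow> admissible G \<and> expansion G 0 = w"
  unfolding grammars_def by (auto simp: generated_eq_expansion)

lemma yk_len_simps [simp]: "yk_len [] = 0" "yk_len (r # G) = length r + yk_len G"
  by (simp_all add: yk_len_def)

fun rename_nt :: "(nat \<Rightarrow> nat) \<Rightarrow> 'x sym \<Rightarrow> 'x sym" where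
  "rename_nt f (T x) = T x"
| "rename_nt f (N j) = N (f j)"

lemma rename_nt_id [simp]: "rename_nt (\<lambda>j. j) s = s"
  by (cases s) auto

lemma N_in_renamed_rule: "N j \<in> set (map (rename_nt f) r) \<longleftrightarrow> (\<exists>j'. N j' \<in> set r \<and> j = f j')"
proof
  assume "N j \<in> set (map (rename_nt f) r)"
  then obtain s where "s \<in> set r" "rename_nt f s = N j" by auto
  moreover from this(2) obtain j' where "s = N j'" "j = f j'" by (cases s) auto
  ultimately show "\<exists>j'. N j' \<in> set r \<and> j = f j'" by blast
next
  assume "\<exists>j'. N j' \<in> set r \<and> j = f j'"
  then obtain j' where j': "N j' \<in> set r" "j = f j'" by blast
  then have "N j = rename_nt f (N j')" by simp
  then show "N j \<in> set (map (rename_nt f) r)" unfolding set_map using j'(1) by (rule image_eqI)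
qed

lemma expansion_rename:
  assumes "admissible G" "admissible G'"
    and rules: "\<And>i. i \<in> I \<Longrightarrow> i < length G \<and> f i < length G' \<and> G' ! f i = map (rename_nt f) (G ! i)"
    and closed: "\<And>i j. i \<in> I \<Longrightarrow> N j \<in> set (G ! i) \<Longrightarrow> j \<in> I"
    and "i \<in> I"
  shows "expansion G' (f i) = expansion G i"
  using \<open>i \<in> I\<close>
proof (induction i rule: measure_induct_rule[where f = "\<lambda>i. length G - i"])
  case (less i)
  note rule_i = rules[OF less.prems]
  have "sym_expansion G' (rename_nt f s) = sym_expansion G s" if "s \<in> set (G ! i)" for s
  proof (cases s)
    case (N j)
    with that admissible_N_in_rule[OF assms(1), of i j] rule_i have "i < j" "j < length G" by auto
    moreover have "j \<in> I" using closed[OF less.prems] that N by simp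
    ultimately show ?thesis using less.IH[of j] N by simp
  qed simp
  then show ?case
    using rule_i expansion_rule[OF assms(1), of i] expansion_rule[OF assms(2), of "f i"]
    by (simp cong: map_cong)
qed

lemma replace_start_in_grammars:
  assumes "admissible G" and r: "\<And>j. N j \<in> set r \<Longrightarrow> 0 < j \<and> j < length G"
  shows "r # tl G \<in> grammars (concat (map (sym_expansion G) r))"
proof -
  obtain g gs where G: "G = g # gs"
    using assms(1) by (cases G) (auto simp: admissible_def)
  have adm: "admissible (r # gs)"
  proof (rule admissibleI)
    fix i j assume ij: "i < length (r # gs)" "N j \<in> set ((r # gs) ! i)"
    show "i < j \<and> j < length (r # gs)"
      by (cases i) (use ij r admissible_N_in_rule[OF assms(1), of i j] in \<open>auto simp: G\<close>)
  qed simp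
  have "expansion (r # gs) j = expansion G j" if "j \<in> {1..<length G}" for j
  proof (rule expansion_rename[OF assms(1) adm, where f = "\<lambda>j. j"])
    fix i assume "i \<in> {1..<length G}"
    then show "i < length G \<and> i < length (r # gs) \<and> (r # gs) ! i = map (rename_nt (\<lambda>j. j)) (G ! i)"
      by (auto simp: G nth_Cons' map_idI)
  next
    fix i j assume "i \<in> {1..<length G}" "N j \<in> set (G ! i)"
    then show "j \<in> {1..<length G}" using admissible_N_in_rule[OF assms(1), of i j] by auto
  qed (rule that)
  note secondary = this
  have "sym_expansion (r # gs) s = sym_expansion G s" if "s \<in> set r" for s
  proof (cases s)
    case (N j)
    with that r[of j] secondary[of j] show ?thesis by simp
  qed simp
  then show ?thesis
    using expansion_rule[OF adm, of 0] adm by (simp add: G grammars_iff cong: map_cong)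
qed

section \<open>Concatenation and inlining\<close>

definition concat_grammar :: "'x grammar \<Rightarrow> 'x grammar \<Rightarrow> 'x grammar" where
  "concat_grammar G1 G2 =
     (let sh = rename_nt (\<lambda>j. j + length (tl G1))
      in (hd G1 @ map sh (hd G2)) # tl G1 @ map (map sh) (tl G2))"

lemma length_concat_grammar:
  "G2 \<noteq> [] \<Longrightarrow> length (concat_grammar G1 G2) = length (tl G1) + length G2"
  by (cases G2) (simp_all add: concat_grammar_def Let_def)

lemma yk_len_concat_grammar:
  "G1 \<noteq> [] \<Longrightarrow> G2 \<noteq> [] \<Longrightarrow> yk_len (concat_grammar G1 G2) = yk_len G1 + yk_len G2"
  by (cases G1; cases G2) (simp_all add: concat_grammar_def Let_def yk_len_def comp_def)

lemma nth_concat_grammar_left: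
  "0 < i \<Longrightarrow> i < length G1 \<Longrightarrow> concat_grammar G1 G2 ! i = G1 ! i"
  by (cases G1; cases i) (auto simp: concat_grammar_def Let_def nth_append)

lemma nth_concat_grammar_right:
  "G1 \<noteq> [] \<Longrightarrow> 0 < i \<Longrightarrow> i < length G2 \<Longrightarrow>
   concat_grammar G1 G2 ! (i + length (tl G1)) = map (rename_nt (\<lambda>j. j + length (tl G1))) (G2 ! i)"
  by (cases G1; cases G2; cases i) (auto simp: concat_grammar_def Let_def nth_append)

lemma admissible_concat_grammar:
  assumes a1: "admissible G1" and a2: "admissible G2"
  shows "admissible (concat_grammar G1 G2)"
proof (rule admissibleI)
  let ?k = "length (tl G1)" and ?C = "concat_grammar G1 G2"
  have ne: "G1 \<noteq> []" "G2 \<noteq> []" using a1 a2 by (auto simp: admissible_def)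
  then have len: "length ?C = ?k + length G2" by (simp add: length_concat_grammar)
  from ne have "0 < length G1" "0 < length G2" by simp_all
  have shifted: "i < j \<and> j < length ?C"
    if "N j \<in> set (map (rename_nt (\<lambda>j. j + ?k)) (G2 ! i'))" "i' < length G2" "i \<le> i' + ?k" for i i' j
  proof -
    from that(1)[unfolded N_in_renamed_rule] obtain j' where "N j' \<in> set (G2 ! i')" "j = j' + ?k"
      by blast
    with admissible_N_in_rule[OF a2 that(2), of j'] that(3) len show ?thesis by simp
  qed
  show "?C \<noteq> []" by (simp add: concat_grammar_def Let_def)
  fix i j assume i: "i < length ?C" and j: "N j \<in> set (?C ! i)"
  consider "i = 0" | "0 < i" "i < length G1" | "length G1 \<le> i" by linarith
  then show "i < j \<and> j < length ?C"
  proof cases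
    case 1
    with j ne have "N j \<in> set (G1 ! 0) \<or> N j \<in> set (map (rename_nt (\<lambda>j. j + ?k)) (G2 ! 0))"
      by (auto simp: concat_grammar_def Let_def hd_conv_nth)
    then show ?thesis
    proof
      assume "N j \<in> set (G1 ! 0)"
      with admissible_N_in_rule[OF a1, of 0 j] len 1 ne \<open>0 < length G2\<close> show ?thesis by (auto simp: neq_Nil_conv)
    qed (use shifted[of j 0 i] ne 1 in simp)
  next
    case 2
    with j have "N j \<in> set (G1 ! i)" by (simp add: nth_concat_grammar_left)
    with admissible_N_in_rule[OF a1, of i j] 2 len ne \<open>0 < length G2\<close> show ?thesis by (auto simp: neq_Nil_conv)
  next
    case 3
    define i' where "i' = i - ?k"
    have i': "i = i' + ?k" "0 < i'" "i' < length G2" using 3 i len ne by (auto simp: i'_def neq_Nil_conv)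
    from j have "N j \<in> set (map (rename_nt (\<lambda>j. j + ?k)) (G2 ! i'))"
      unfolding i'(1) nth_concat_grammar_right[OF ne(1) i'(2,3)] .
    moreover have "i \<le> i' + ?k" using i'(1) by simp
    ultimately show ?thesis using i'(3) by (intro shifted)
  qed
qed

lemma expansion_concat_grammar:
  assumes a1: "admissible G1" and a2: "admissible G2"
  shows "expansion (concat_grammar G1 G2) 0 = expansion G1 0 @ expansion G2 0"
proof -
  obtain g1 gs1 g2 gs2 where G: "G1 = g1 # gs1" "G2 = g2 # gs2"
    using a1 a2 by (cases G1; cases G2) (auto simp: admissible_def)
  define k where "k = length gs1"
  let ?C = "concat_grammar G1 G2" and ?sh = "rename_nt (\<lambda>j. j + k)"
  have aC: "admissible ?C" using a1 a2 by (rule admissible_concat_grammar)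
  have len: "length ?C = Suc (k + length gs2)" by (simp add: length_concat_grammar G k_def)
  have left: "expansion ?C j = expansion G1 j" if "j \<in> {1..<length G1}" for j
  proof (rule expansion_rename[OF a1 aC, where f = "\<lambda>j. j"])
    fix i assume "i \<in> {1..<length G1}"
    then show "i < length G1 \<and> i < length ?C \<and> ?C ! i = map (rename_nt (\<lambda>j. j)) (G1 ! i)"
      using len by (auto simp: nth_concat_grammar_left map_idI G k_def)
  next
    fix i j assume "i \<in> {1..<length G1}" "N j \<in> set (G1 ! i)"
    then show "j \<in> {1..<length G1}" using admissible_N_in_rule[OF a1, of i j] by auto
  qed (rule that)
  have right: "expansion ?C (j + k) = expansion G2 j" if "j \<in> {1..<length G2}" for j
  proof (rule expansion_rename[OF a2 aC, where f = "\<lambda>j. j + k"])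
    fix i assume "i \<in> {1..<length G2}"
    then show "i < length G2 \<and> i + k < length ?C \<and> ?C ! (i + k) = map ?sh (G2 ! i)"
      using len nth_concat_grammar_right[of G1 i G2] by (auto simp: G k_def)
  next
    fix i j assume "i \<in> {1..<length G2}" "N j \<in> set (G2 ! i)"
    then show "j \<in> {1..<length G2}" using admissible_N_in_rule[OF a2, of i j] by auto
  qed (rule that)
  have "sym_expansion ?C s = sym_expansion G1 s" if "s \<in> set (G1 ! 0)" for s
  proof (cases s)
    case (N j)
    with admissible_N_in_rule[OF a1, of 0 j] that left[of j] show ?thesis by (simp add: G)
  qed simp
  moreover have "sym_expansion ?C (?sh s) = sym_expansion G2 s" if "s \<in> set (G2 ! 0)" for s
  proof (cases s)
    case (N j)
    with admissible_N_in_rule[OF a2, of 0 j] that right[of j] show ?thesis by (simp add: G)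
  qed simp
  moreover have "?C ! 0 = G1 ! 0 @ map ?sh (G2 ! 0)"
    by (simp add: concat_grammar_def Let_def G k_def)
  ultimately show ?thesis
    using expansion_rule[OF aC, of 0] expansion_rule[OF a1, of 0] expansion_rule[OF a2, of 0] aC
    by (simp add: G admissible_def cong: map_cong)
qed

lemma concat_grammar_in_grammars:
  "G1 \<in> grammars u \<Longrightarrow> G2 \<in> grammars v \<Longrightarrow> concat_grammar G1 G2 \<in> grammars (u @ v)"
  by (simp add: grammars_iff admissible_concat_grammar expansion_concat_grammar)

definition inline :: "nat \<Rightarrow> 'x grammar \<Rightarrow> 'x grammar" where
  "inline k G = (map (concat \<circ> map (\<lambda>s. if s = N k then G ! k else [s])) G)[k := []]"

lemma length_inline [simp]: "length (inline k G) = length G"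
  by (simp add: inline_def)

lemma nth_inline:
  "i < length G \<Longrightarrow> inline k G ! i = (if i = k then [] else concat (map (\<lambda>s. if s = N k then G ! k else [s]) (G ! i)))"
  by (simp add: inline_def)

lemma admissible_inline:
  assumes aG: "admissible G" and k: "k < length G"
  shows "admissible (inline k G)"
proof (rule admissibleI)
  show "inline k G \<noteq> []" using aG by (simp add: inline_def admissible_def)
  fix i j assume i: "i < length (inline k G)" and j: "N j \<in> set (inline k G ! i)"
  with nth_inline[of i G k] obtain t where t: "t \<in> set (G ! i)" "N j \<in> set (if t = N k then G ! k else [t])"
    by (auto split: if_splits)
  show "i < j \<and> j < length (inline k G)"
  proof (cases "t = N k")
    case True
    with t have "N k \<in> set (G ! i)" "N j \<in> set (G ! k)" by auto
    with admissible_N_in_rule[OF aG, of i k] admissible_N_in_rule[OF aG k, of j] i show ?thesis by auto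
  next
    case False
    with t have "N j \<in> set (G ! i)" by auto
    with admissible_N_in_rule[OF aG, of i j] i show ?thesis by auto
  qed
qed

lemma expansion_inline:
  assumes aG: "admissible G" and k: "k < length G" and "i < length G" "i \<noteq> k"
  shows "expansion (inline k G) i = expansion G i"
  using assms(3,4)
proof (induction i rule: measure_induct_rule[where f = "\<lambda>i. length G - i"])
  case (less i)
  let ?G' = "inline k G" and ?g = "\<lambda>s. if s = N k then G ! k else [s]"
  have unchanged: "sym_expansion ?G' s = sym_expansion G s"
    if "s \<in> set (G ! j)" "i \<le> j" "j < length G" "s \<noteq> N k" for s j
  proof (cases s)
    case (N j')
    with admissible_N_in_rule[OF aG that(3), of j'] that have "i < j'" "j' < length G" "j' \<noteq> k" by auto
    then show ?thesis using less.IH[of j'] N by simp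
  qed simp
  have "concat (map (sym_expansion ?G') (?g t)) = sym_expansion G t" if t: "t \<in> set (G ! i)" for t
  proof (cases "t = N k")
    case True
    with t admissible_N_in_rule[OF aG less.prems(1)] have "i < k" by blast
    moreover have "s \<noteq> N k" if "s \<in> set (G ! k)" for s
      using that admissible_N_in_rule[OF aG k, of k] by blast
    ultimately have "map (sym_expansion ?G') (G ! k) = map (sym_expansion G) (G ! k)"
      using unchanged[of _ k] k by (intro map_cong) auto
    then show ?thesis using True expansion_rule[OF aG k] by (simp cong: map_cong)
  next
    case False
    then show ?thesis using unchanged[OF t order.refl less.prems(1)] by simp
  qed
  then show ?case
    using less.prems expansion_rule[OF admissible_inline[OF aG k], of i] expansion_rule[OF aG less.prems(1)]
    by (simp add: nth_inline concat_map_concat cong: map_cong)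
qed

definition nt_count :: "'x grammar \<Rightarrow> nat \<Rightarrow> nat" where
  "nt_count G k = (\<Sum>r\<leftarrow>G. count_list r (N k))"

lemma yk_len_inline:
  assumes "admissible G" "k < length G"
  shows "yk_len (inline k G) + nt_count G k + length (G ! k) = yk_len G + nt_count G k * length (G ! k)"
proof -
  let ?g = "\<lambda>s. if s = N k then G ! k else [s]"
  define G' where "G' = map (concat \<circ> map ?g) G"
  have "count_list (G ! k) (N k) = 0"
    using admissible_N_in_rule[OF assms, of k] by (auto simp: count_list_0_iff)
  then have "length (G' ! k) = length (G ! k)"
    using length_concat_map_replace[of "N k" "G ! k" "G ! k"] assms(2) by (simp add: G'_def)
  then have "yk_len (inline k G) + length (G ! k) = yk_len G'"
    using assms(2) sum_list_update[of k "map length G'" 0] elem_le_sum_list[of k "map length G'"]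
    by (simp add: inline_def yk_len_def G'_def map_update)
  moreover have "yk_len G' + nt_count G k = (\<Sum>r\<leftarrow>G. length (concat (map ?g r)) + count_list r (N k))"
    by (simp add: yk_len_def nt_count_def G'_def sum_list_addf comp_def)
  moreover have "\<dots> = (\<Sum>r\<leftarrow>G. length r + count_list r (N k) * length (G ! k))"
    by (simp only: length_concat_map_replace)
  moreover have "\<dots> = yk_len G + nt_count G k * length (G ! k)"
    by (simp add: yk_len_def nt_count_def sum_list_addf sum_list_mult_const)
  ultimately show ?thesis by simp
qed

section \<open>Minimal grammars\<close>

definition yk_minimal_grammar :: "'x grammar \<Rightarrow> bool" where
  "yk_minimal_grammar G \<longleftrightarrow> admissible G \<and> (\<forall>G' \<in> grammars (generated G). yk_len G \<le> yk_len G')"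

lemma yk_minimal_grammar_nt_count_ge_2:
  assumes min: "yk_minimal_grammar G" and k: "0 < k" "k < length G" and "G ! k \<noteq> []"
  shows "2 \<le> nt_count G k"
proof -
  have aG: "admissible G" using min by (simp add: yk_minimal_grammar_def)
  have "inline k G \<in> grammars (generated G)"
    using expansion_inline[OF aG k(2) order.strict_trans[OF k] less_imp_neq[OF k(1)]]
      admissible_inline[OF aG k(2)]
    by (simp add: grammars_iff generated_eq_expansion[OF aG])
  with min have "yk_len G \<le> yk_len (inline k G)" by (simp add: yk_minimal_grammar_def)
  with yk_len_inline[OF aG k(2)]
  have "nt_count G k + length (G ! k) \<le> nt_count G k * length (G ! k)" by simp
  with \<open>G ! k \<noteq> []\<close> show ?thesis
    by (cases "nt_count G k"; cases "nt_count G k - 1") auto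
qed

lemma expansion_secondary_nonempty:
  assumes aG: "admissible G" and ne: "\<And>i. 0 < i \<Longrightarrow> i < length G \<Longrightarrow> G ! i \<noteq> []"
    and "0 < k" "k < length G"
  shows "expansion G k \<noteq> []"
  using assms(3,4)
proof (induction k rule: measure_induct_rule[where f = "\<lambda>k. length G - k"])
  case (less k)
  from ne[OF less.prems] obtain s r where r: "G ! k = s # r" by (cases "G ! k") auto
  have "sym_expansion G s \<noteq> []"
  proof (cases s)
    case (N j)
    with r admissible_N_in_rule[OF aG less.prems(2), of j] have "k < j" "j < length G" by auto
    with less.IH[of j] less.prems N show ?thesis by simp
  qed simp
  with r show ?case using expansion_rule[OF aG less.prems(2)] by simp
qed

lemma length_rule_le_expansion:
  assumes aG: "admissible G" and ne: "\<And>i. 0 < i \<Longrightarrow> i < length G \<Longrightarrow> G ! i \<noteq> []"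
    and i: "i < length G"
  shows "length (G ! i) \<le> length (expansion G i)"
proof -
  have "sym_expansion G s \<noteq> []" if "s \<in> set (G ! i)" for s
  proof (cases s)
    case (N j)
    with that admissible_N_in_rule[OF aG i, of j] have "0 < j" "j < length G" by auto
    with expansion_secondary_nonempty[OF aG ne] N show ?thesis by simp
  qed simp
  then show ?thesis
    using expansion_rule[OF aG i] length_le_length_concat_map by metis
qed

lemma yk_minimal_grammar_secondary_is_repeat:
  assumes min: "yk_minimal_grammar G" and ne: "\<And>i. 0 < i \<Longrightarrow> i < length G \<Longrightarrow> G ! i \<noteq> []"
    and "0 < k" "k < length G"
  shows "is_repeat (expansion G k) (generated G)"
  using assms(3,4)
proof (induction k rule: less_induct)
  case (less k)
  have aG: "admissible G" using min by (simp add: yk_minimal_grammar_def)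
  show ?case
  proof (cases "\<exists>i. 0 < i \<and> i < length G \<and> N k \<in> set (G ! i)")
    case True
    then obtain i a b where i: "0 < i" "i < length G" "G ! i = a @ N k # b" by (metis split_list)
    then have "i < k" using admissible_N_in_rule[OF aG i(2), of k] by simp
    with less.IH i have "is_repeat (expansion G i) (generated G)" by blast
    moreover have "expansion G i = concat (map (sym_expansion G) a) @ expansion G k @ concat (map (sym_expansion G) b)"
      using expansion_rule[OF aG i(2)] i(3) by simp
    ultimately show ?thesis by (metis is_repeat_infix)
  next
    case False
    obtain g gs where G: "G = g # gs" using aG by (cases G) (auto simp: admissible_def)
    have "count_list r (N k) = 0" if "r \<in> set gs" for r
    proof -
      from that obtain i where "i < length gs" "r = gs ! i" by (auto simp: in_set_conv_nth)
      with False have "N k \<notin> set r" unfolding G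
        by (metis Suc_less_eq length_Cons nth_Cons_Suc zero_less_Suc)
      then show ?thesis by (simp add: count_list_0_iff)
    qed
    then have "nt_count G k = count_list (G ! 0) (N k)" by (simp add: nt_count_def G)
    with yk_minimal_grammar_nt_count_ge_2[OF min less.prems ne[OF less.prems]]
    obtain a b c where g: "G ! 0 = a @ N k # b @ N k # c" by (metis count_list_ge_2_split)
    define e where "e = expansion G k"
    define A where "A = concat (map (sym_expansion G) a)"
    define B where "B = concat (map (sym_expansion G) b)"
    define C where "C = concat (map (sym_expansion G) c)"
    have "generated G = A @ e @ B @ e @ C"
      using generated_eq_start_rule[OF aG] g by (simp add: A_def B_def C_def e_def)
    moreover have "A \<noteq> A @ e @ B"
      using expansion_secondary_nonempty[OF aG ne less.prems] by (simp add: e_def)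
    ultimately show ?thesis unfolding is_repeat_def e_def[symmetric]
      by (metis append.assoc)
  qed
qed

lemma yk_minimal_grammar_split:
  assumes min: "yk_minimal_grammar G" and ne: "\<And>i. 0 < i \<Longrightarrow> i < length G \<Longrightarrow> G ! i \<noteq> []"
    and w: "generated G = u @ v"
  obtains Gu Gv where "Gu \<in> grammars u" "Gv \<in> grammars v"
    "yk_len Gu + yk_len Gv \<le> yk_len G + V G * maxrep (u @ v)"
proof -
  have aG: "admissible G" using min by (simp add: yk_minimal_grammar_def)
  obtain g gs where G: "G = g # gs" using aG by (cases G) (auto simp: admissible_def)
  have start: "generated G = concat (map (sym_expansion G) g)"
    using generated_eq_start_rule[OF aG] by (simp add: G)
  define L where "L = maxrep (u @ v)"
  have secondary: "length (expansion G j) \<le> L" if "0 < j" "j < length G" for j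
    using is_repeat_le_maxrep[OF yk_minimal_grammar_secondary_is_repeat[OF min ne that]] w by (simp add: L_def)
  have "length r \<le> L" if "r \<in> set gs" for r
  proof -
    from that obtain i where "i < length gs" "r = G ! Suc i" by (auto simp: G in_set_conv_nth)
    with length_rule_le_expansion[OF aG ne, of "Suc i"] secondary[of "Suc i"] show ?thesis
      by (simp add: G)
  qed
  then have gs: "yk_len gs \<le> length gs * L"
    using sum_list_mono[of gs length "\<lambda>_. L"] by (simp add: yk_len_def sum_list_triv)
  show ?thesis
  proof (cases "g = []")
    case True
    with w start have "u = []" "v = []" by simp_all
    moreover have "[[]] \<in> grammars []" by (simp add: grammars_iff admissible_def expansion.simps)
    ultimately show ?thesis using that[of "[[]]" "[[]]"] by simp
  next
    case False
    from w start have "concat (map (sym_expansion G) g) = u @ v" by simp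
    then obtain a s b p q where split: "g = a @ s # b" "sym_expansion G s = p @ q"
        "u = concat (map (sym_expansion G) a) @ p" "v = q @ concat (map (sym_expansion G) b)"
      using False by (rule concat_map_eq_appendE)
    have nts: "0 < j \<and> j < length G" if "N j \<in> set (a @ s # b)" for j
      using admissible_N_in_rule[OF aG, of 0 j] that by (simp add: G split(1))
    have "(a @ map T p) # tl G \<in> grammars (concat (map (sym_expansion G) (a @ map T p)))"
      by (rule replace_start_in_grammars[OF aG]) (use nts in force)
    then have Gu: "(a @ map T p) # gs \<in> grammars u" by (simp add: G split(3))
    have "(map T q @ b) # tl G \<in> grammars (concat (map (sym_expansion G) (map T q @ b)))"
      by (rule replace_start_in_grammars[OF aG]) (use nts in force)
    then have Gv: "(map T q @ b) # gs \<in> grammars v" by (simp add: G split(4))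
    have "length (sym_expansion G s) \<le> 1 + L"
    proof (cases s)
      case (N j)
      with nts[of j] secondary[of j] show ?thesis by simp
    qed simp
    with split(2) have "yk_len ((a @ map T p) # gs) + yk_len ((map T q @ b) # gs) \<le> yk_len G + L + yk_len gs"
      by (simp add: G split(1))
    also have "\<dots> \<le> yk_len G + V G * L" using gs by (simp add: G V_def)
    finally show ?thesis using that Gu Gv by (simp add: L_def)
  qed
qed

lemma yk_minimal_transform_le:
  "yk_minimal_transform \<Gamma> \<Longrightarrow> G \<in> grammars w \<Longrightarrow> yk_len (\<Gamma> w) \<le> yk_len G"
  unfolding yk_minimal_transform_def by (metis bdd_below_bot cInf_lower image_eqI)

lemma yk_minimal_transformD:
  assumes "yk_minimal_transform \<Gamma>"
  shows "\<Gamma> w \<in> grammars w" "yk_minimal_grammar (\<Gamma> w)"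
    "\<And>i. 0 < i \<Longrightarrow> i < length (\<Gamma> w) \<Longrightarrow> \<Gamma> w ! i \<noteq> []"
proof -
  show "\<Gamma> w \<in> grammars w" using assms by (simp add: yk_minimal_transform_def)
  then show "yk_minimal_grammar (\<Gamma> w)"
    using yk_minimal_transform_le[OF assms] by (auto simp: yk_minimal_grammar_def grammars_def)
  show "\<And>i. 0 < i \<Longrightarrow> i < length (\<Gamma> w) \<Longrightarrow> \<Gamma> w ! i \<noteq> []"
    using assms by (simp add: yk_minimal_transform_def)
qed

theorem theorem4:
  fixes \<Gamma> :: "('x::finite) list \<Rightarrow> 'x grammar"
    and u v w :: "'x list"
  assumes "yk_minimal_transform \<Gamma>"
    and "w = u @ v"
  shows "0 \<le> int (yk_len (\<Gamma> u)) + int (yk_len (\<Gamma> v)) - int (yk_len (\<Gamma> w))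
       \<and> int (yk_len (\<Gamma> u)) + int (yk_len (\<Gamma> v)) - int (yk_len (\<Gamma> w))
           \<le> int (V (\<Gamma> w) * maxrep w)"
proof -
  note \<Gamma> = yk_minimal_transformD[OF assms(1)]
  have "\<Gamma> x \<noteq> []" for x using \<Gamma>(1)[of x] by (simp add: grammars_iff admissible_def)
  then have "yk_len (\<Gamma> w) \<le> yk_len (\<Gamma> u) + yk_len (\<Gamma> v)"
    using yk_minimal_transform_le[OF assms(1) concat_grammar_in_grammars[OF \<Gamma>(1) \<Gamma>(1)]]
    by (simp add: yk_len_concat_grammar assms(2))
  moreover have "generated (\<Gamma> w) = u @ v" using \<Gamma>(1)[of w] assms(2) by (simp add: grammars_def)
  then obtain Gu Gv where "Gu \<in> grammars u" "Gv \<in> grammars v"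
      "yk_len Gu + yk_len Gv \<le> yk_len (\<Gamma> w) + V (\<Gamma> w) * maxrep (u @ v)"
    using yk_minimal_grammar_split[OF \<Gamma>(2) \<Gamma>(3)] by blast
  then have "yk_len (\<Gamma> u) + yk_len (\<Gamma> v) \<le> yk_len (\<Gamma> w) + V (\<Gamma> w) * maxrep w"
    using yk_minimal_transform_le[OF assms(1)] assms(2) by (meson add_mono order_trans)
  ultimately show ?thesis by linarith
qed

end
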